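(* Consider the problem $\min_{x\in\mathbb R^n} f(x)$ subject to $Ax=b$, where $f:\mathbb R^n\to\mathbb R$ is convex and continuously differentiable, $A\in\mathbb R^{m\times n}$, $b\in\mathbb R^m$, and assume the KKT set $\Omega$ is nonempty. Let $\{(x_k,\lambda_k)\}_{k\ge0}$ be generated by the accelerated augmented Lagrangian method described in the context (in either Case I or Case II) with $\rho\in(0,1)$ and $\eta\in(\rho,1)$, and let $(x^*,\lambda^* )\in\Omega$ be the limit of $\{(x_k,\lambda_k)\}_{k\ge0}$. Then, as $k\to+\infty$, $\mathcal L_\beta(x_k,\lambda^* )-\mathcal L_\beta(x^*,\lambda^* )=o(1/t_k^2)$, $\|(x_k,\lambda_k)-(x_{k-1},\lambda_{k-1})\|=o(1/t_k)$, $\|Ax_k-b\|=o(1/t_k^2)$, and $|f(x_k)-f(x^* )|=o(1/t_k^2)$.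
   Context: The KKT set is $\Omega=\{(x^*,\lambda^* )\in\mathbb R^n\times\mathbb R^m: Ax^*=b,\ \nabla f(x^* )+A^\top\lambda^*=0\}$. For $\beta\ge0$, $\mathcal L_\beta(x,\lambda)=f(x)+\langle\lambda,Ax-b\rangle+\frac\beta2\|Ax-b\|^2$. Parameter sequence: $\{t_k\}_{k\ge1}$ is nondecreasing, $t_1=1$, $t_k>1$ for all $k>2$, $t_k\to+\infty$, and $t_{k+1}^2-t_k^2\le\rho t_{k+1}$ for all $k\ge 1$, with fixed $\rho$. Fix $\eta\ge\rho$, $\gamma>0$, $\delta>0$, $\beta\ge0$. Algorithm: initial points $x_0=x_1\in\mathbb R^n$, $\lambda_0=\lambda_1\in\mathbb R^m$. For $k=1,2,\dots$: set $\alpha_k=(t_{k+1}-\eta)/\eta$, $c_k=t_{k+1}/\eta$, $\bar x_k=x_k+\frac{t_k-1}{t_{k+1}}(x_k-x_{k-1})$, $\bar\lambda_k=\lambda_k+\frac{t_k-1}{t_{k+1}}(\lambda_k-\lambda_{k-1})$, $p_k=c_k\bar\lambda_k-\alpha_k\lambda_k$, $r_k=\alpha_kAx_k+b$. Case I ($f$ convex and $C^1$): $x_{k+1}=\arg\min_{x}\{f(x)+\frac\beta2\|Ax-b\|^2+\frac1{2\gamma}\|x-\bar x_k\|^2+\langle p_k,Ax-b\rangle+\frac\delta2\|c_kAx-r_k\|^2\}$. Case II ($f$ convex with $L$-Lipschitz gradient, and $\gamma\le 1/L$): $x_{k+1}=\arg\min_{x}\{\langle\nabla f(\bar x_k),x\rangle+\frac\beta2\|Ax-b\|^2+\frac1{2\gamma}\|x-\bar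 x_k\|^2+\langle p_k,Ax-b\rangle+\frac\delta2\|c_kAx-r_k\|^2\}$. Then $\lambda_{k+1}=\bar\lambda_k+\delta(c_kAx_{k+1}-r_k)$. *)

theory Defs
  imports "HOL-Analysis.Analysis" "HOL-Library.Landau_Symbols"
begin

definition kkt_set ::
  "(real^'n \<Rightarrow> real^'n) \<Rightarrow> real^'n^'m \<Rightarrow> real^'m \<Rightarrow> ((real^'n) \<times> (real^'m)) set" where
  "kkt_set gradf A b = {(x, l). A *v x = b \<and> gradf x + transpose A *v l = 0}"

definition aug_lag ::
  "(real^'n \<Rightarrow> real) \<Rightarrow> real^'n^'m \<Rightarrow> real^'m \<Rightarrow> real \<Rightarrow> real^'n \<Rightarrow> real^'m \<Rightarrow> real" where
  "aug_lag f A b \<beta> x l = f x + l \<bullet> (A *v x - b) + \<beta> / 2 * (norm (A *v x - b))\<^sup>2"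

definition extrap :: "(nat \<Rightarrow> real) \<Rightarrow> (nat \<Rightarrow> 'a::real_vector) \<Rightarrow> nat \<Rightarrow> 'a" where
  "extrap t z k = z k + ((t k - 1) / t (k + 1)) *\<^sub>R (z k - z (k - 1))"

definition alpha_k :: "real \<Rightarrow> (nat \<Rightarrow> real) \<Rightarrow> nat \<Rightarrow> real" where
  "alpha_k \<eta> t k = (t (k + 1) - \<eta>) / \<eta>"

definition c_k :: "real \<Rightarrow> (nat \<Rightarrow> real) \<Rightarrow> nat \<Rightarrow> real" where
  "c_k \<eta> t k = t (k + 1) / \<eta>"

definition p_k :: "real \<Rightarrow> (nat \<Rightarrow> real) \<Rightarrow> (nat \<Rightarrow> real^'m) \<Rightarrow> nat \<Rightarrow> real^'m" where
  "p_k \<eta> t lam k = c_k \<eta> t k *\<^sub>R extrap t lam k - alpha_k \<eta> t k *\<^sub>R lam k"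

definition r_k :: "real \<Rightarrow> (nat \<Rightarrow> real) \<Rightarrow> real^'n^'m \<Rightarrow> real^'m \<Rightarrow> (nat \<Rightarrow> real^'n) \<Rightarrow> nat \<Rightarrow> real^'m" where
  "r_k \<eta> t A b x k = alpha_k \<eta> t k *\<^sub>R (A *v x k) + b"

text \<open>Objective of the x-subproblem at iteration k, with smooth part g
  (Case I: g = f; Case II: g = linearization y \<mapsto> <grad f(xbar_k), y>).\<close>
definition subproblem_obj ::
  "(real^'n \<Rightarrow> real) \<Rightarrow> real^'n^'m \<Rightarrow> real^'m \<Rightarrow> real \<Rightarrow> real \<Rightarrow> real \<Rightarrow> real \<Rightarrow>
   (nat \<Rightarrow> real) \<Rightarrow> (nat \<Rightarrow> real^'n) \<Rightarrow> (nat \<Rightarrow> real^'m) \<Rightarrow> nat \<Rightarrow> real^'n \<Rightarrow> real" where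
  "subproblem_obj g A b \<beta> \<gamma> \<delta> \<eta> t x lam k y =
     g y + \<beta> / 2 * (norm (A *v y - b))\<^sup>2
     + 1 / (2 * \<gamma>) * (norm (y - extrap t x k))\<^sup>2
     + p_k \<eta> t lam k \<bullet> (A *v y - b)
     + \<delta> / 2 * (norm (c_k \<eta> t k *\<^sub>R (A *v y) - r_k \<eta> t A b x k))\<^sup>2"

end

theory Submission
  imports Defs
begin

(* The x-update is a variational inequality for the augmented Lagrangian at an extrapolated
   multiplier lam_hat (in Case II up to a linearisation error, which the proximal term absorbs
   because gamma <= 1/L).  Testing it at y = x k and at y = xs with weights c_k - 1 and 1 gives a
   recursion for gap k = L_beta(x k, ls) - L_beta(xs, ls); a three-point identity for the inertial
   points z (k - 1) + t k (z k - z (k - 1)) turns it into the descent E (k + 1) <= E k - a k of the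
   Lyapunov function E k = t_k^2 gap k / eta + potentials of x and lam.
   As t k <= k, the scaled error M k (t_k^2 gap k plus the squared scaled steps) is at most C k a k,
   so summability of a forces M to be small infinitely often; E is nonincreasing and lies between
   M / 4 and 3 M up to terms that vanish because the iterates converge, hence M k -> 0.
   For the residual, the lam-update shows that t_k^2 (A x k - b) - (eta / delta) (inertial point of
   lam - ls) obeys u (k + 1) = (1 - q k) u k + q k v k with q k >= (eta - rho) / k and v k -> 0,
   which forces u k -> 0.  The bound on |f (x k) - f xs| follows from the other estimates. *)

section \<open>Differentiable convex functions\<close>

lemma real_derivative_le_of_slopes_le:
  fixes \<phi> :: "real \<Rightarrow> real"
  assumes "(\<phi> has_real_derivative D) (at 0)"
    and "\<And>s. 0 < s \<Longrightarrow> s \<le> 1 \<Longrightarrow> \<phi> s - \<phi> 0 \<le> s * B"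
  shows "D \<le> B"
proof (rule tendsto_upperbound)
  show "((\<lambda>s. (\<phi> s - \<phi> 0) / (s - 0)) \<longlongrightarrow> D) (at_right 0)"
    using assms(1) unfolding has_field_derivative_iff by (rule filterlim_mono) (simp_all add: at_le)
  show "\<forall>\<^sub>F s in at_right 0. (\<phi> s - \<phi> 0) / (s - 0) \<le> B"
    unfolding eventually_at_right[OF zero_less_one]
    using assms(2) by (auto intro!: exI[of _ 1] simp: divide_le_eq mult.commute)
qed simp

lemma has_real_derivative_along_line:
  assumes "(f has_derivative f') (at (x + s *\<^sub>R d))"
  shows "((\<lambda>s. f (x + s *\<^sub>R d)) has_real_derivative f' d) (at s)"
proof -
  have "((\<lambda>s. x + s *\<^sub>R d) has_derivative (\<lambda>h. h *\<^sub>R d)) (at s)"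
    by (auto intro!: derivative_eq_intros)
  then have "((\<lambda>s. f (x + s *\<^sub>R d)) has_derivative (\<lambda>h. f' (h *\<^sub>R d))) (at s)"
    using assms by (rule has_derivative_compose)
  moreover have "(\<lambda>h. f' (h *\<^sub>R d)) = (*) (f' d)"
    using has_derivative_bounded_linear[OF assms] by (auto simp: linear_simps)
  ultimately show ?thesis by (simp add: has_field_derivative_def)
qed

lemma convex_on_gradient_ineq:
  fixes f :: "'a::real_inner \<Rightarrow> real"
  assumes "convex_on UNIV f" and "(f has_derivative (\<lambda>h. g \<bullet> h)) (at x)"
  shows "f x + g \<bullet> (y - x) \<le> f y"
proof -
  have "g \<bullet> (y - x) \<le> f y - f x"
  proof (rule real_derivative_le_of_slopes_le)
    show "((\<lambda>s. f (x + s *\<^sub>R (y - x))) has_real_derivative g \<bullet> (y - x)) (at 0)"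
      using has_real_derivative_along_line[of f _ x 0] assms(2) by simp
    show "f (x + s *\<^sub>R (y - x)) - f (x + 0 *\<^sub>R (y - x)) \<le> s * (f y - f x)" if "0 < s" "s \<le> 1" for s
      using convex_onD[OF assms(1), of s x y] that by (simp add: algebra_simps)
  qed
  then show ?thesis by simp
qed

lemma convex_plus_smooth_min_variational_ineq:
  fixes g h :: "'a::real_normed_vector \<Rightarrow> real"
  assumes "convex_on UNIV g" and "(h has_derivative h') (at x)"
    and "\<And>z. g x + h x \<le> g z + h z"
  shows "0 \<le> g y - g x + h' (y - x)"
proof -
  have "- h' (y - x) \<le> g y - g x"
  proof (rule real_derivative_le_of_slopes_le)
    show "((\<lambda>s. - h (x + s *\<^sub>R (y - x))) has_real_derivative - h' (y - x)) (at 0)"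
      using has_real_derivative_along_line[of h _ x 0] assms(2) by (auto intro: DERIV_minus)
    show "- h (x + s *\<^sub>R (y - x)) - - h (x + 0 *\<^sub>R (y - x)) \<le> s * (g y - g x)"
      if "0 < s" "s \<le> 1" for s
      using convex_onD[OF assms(1), of s x y] assms(3)[of "x + s *\<^sub>R (y - x)"] that
      by (simp add: algebra_simps)
  qed
  then show ?thesis by simp
qed

lemma has_derivative_norm_sq:
  assumes "(f has_derivative f') (at x)"
  shows "((\<lambda>y. (norm (f y))\<^sup>2) has_derivative (\<lambda>h. 2 * (f x \<bullet> f' h))) (at x)"
  unfolding power2_norm_eq_inner
  using has_derivative_inner[OF assms assms] by (simp add: inner_commute)

lemma lipschitz_gradient_upper_bound:
  fixes f :: "'a::real_inner \<Rightarrow> real"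
  assumes grad: "\<And>z. (f has_derivative (\<lambda>h. G z \<bullet> h)) (at z)"
    and lip: "\<And>u v. norm (G u - G v) \<le> L * norm (u - v)"
  shows "f y \<le> f x + G x \<bullet> (y - x) + L / 2 * (norm (y - x))\<^sup>2"
proof -
  define d where "d = y - x"
  define \<psi> where "\<psi> s = f (x + s *\<^sub>R d) - s * (G x \<bullet> d) - L / 2 * s\<^sup>2 * (norm d)\<^sup>2" for s
  have "\<psi> 1 \<le> \<psi> 0"
  proof (rule DERIV_nonpos_imp_nonincreasing[of 0 1 \<psi>])
    fix s :: real assume s: "0 \<le> s" "s \<le> 1"
    have "(\<psi> has_real_derivative G (x + s *\<^sub>R d) \<bullet> d - G x \<bullet> d - L * s * (norm d)\<^sup>2) (at s)"
      unfolding \<psi>_def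
      by (rule has_real_derivative_along_line[OF grad] derivative_eq_intros refl
          | simp add: power2_eq_square)+
    moreover have "G (x + s *\<^sub>R d) \<bullet> d - G x \<bullet> d \<le> L * s * (norm d)\<^sup>2"
    proof -
      have "G (x + s *\<^sub>R d) \<bullet> d - G x \<bullet> d \<le> norm (G (x + s *\<^sub>R d) - G x) * norm d"
        by (metis inner_diff_left norm_cauchy_schwarz)
      also have "\<dots> \<le> L * norm (s *\<^sub>R d) * norm d"
        using lip[of "x + s *\<^sub>R d" x] by (intro mult_right_mono) auto
      finally show ?thesis using s by (simp add: power2_eq_square)
    qed
    ultimately show "\<exists>D. (\<psi> has_real_derivative D) (at s) \<and> D \<le> 0"
      by (intro exI conjI) (assumption, linarith)
  qed simp
  then show ?thesis by (simp add: \<psi>_def d_def)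
qed

lemma lipschitz_gradient_three_point_ineq:
  fixes f :: "'a::real_inner \<Rightarrow> real"
  assumes "convex_on UNIV f" and grad: "\<And>z. (f has_derivative (\<lambda>h. G z \<bullet> h)) (at z)"
    and lip: "\<And>u v. norm (G u - G v) \<le> L * norm (u - v)"
    and "0 < L" and "0 < \<gamma>" and "\<gamma> \<le> 1 / L"
  shows "G x \<bullet> (y - z) - 1 / (2 * \<gamma>) * (norm (z - x))\<^sup>2 \<le> f y - f z"
proof -
  have "f x + G x \<bullet> (y - x) \<le> f y"
    by (rule convex_on_gradient_ineq[OF assms(1) grad])
  moreover have "f z \<le> f x + G x \<bullet> (z - x) + L / 2 * (norm (z - x))\<^sup>2"
    by (rule lipschitz_gradient_upper_bound[OF grad lip])
  moreover have "L / 2 * (norm (z - x))\<^sup>2 \<le> 1 / (2 * \<gamma>) * (norm (z - x))\<^sup>2"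
    using assms(4-6) by (intro mult_right_mono) (auto simp: field_simps)
  ultimately show ?thesis
    by (simp add: inner_diff_right)
qed

section \<open>Real sequences\<close>

lemma summable_imp_frequently_index_mult_less:
  fixes a :: "nat \<Rightarrow> real"
  assumes "summable a" and "0 < \<epsilon>"
  shows "\<exists>\<^sub>F k in sequentially. real k * a k < \<epsilon>"
proof (rule ccontr)
  assume "\<not> ?thesis"
  then have "\<forall>\<^sub>F k in sequentially. \<epsilon> \<le> real k * a k"
    by (simp add: not_frequently not_less)
  then have "\<forall>\<^sub>F k in sequentially. norm (\<epsilon> * inverse (real k)) \<le> a k"
    using eventually_gt_at_top[of 0]
    by eventually_elim (use \<open>0 < \<epsilon>\<close> in \<open>simp add: field_simps\<close>)
  then have "summable (\<lambda>k. \<epsilon> * inverse (real k))"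
    using assms(1) by (rule summable_comparison_test_ev)
  then have "summable (\<lambda>k. inverse (real k))"
    using summable_mult[of _ "inverse \<epsilon>"] \<open>0 < \<epsilon>\<close> by (fastforce simp: field_simps)
  then show False
    using not_summable_harmonic[where 'a=real] by simp
qed

lemma summable_imp_frequently_less:
  fixes a M :: "nat \<Rightarrow> real"
  assumes "summable a" and "\<forall>\<^sub>F k in sequentially. M k \<le> D * (real k * a k)"
    and "0 \<le> D" and "0 < \<epsilon>"
  shows "\<exists>\<^sub>F k in sequentially. M k < \<epsilon>"
proof -
  have "\<exists>\<^sub>F k in sequentially. real k * a k < \<epsilon> / (D + 1)"
    using assms(1,3,4) by (intro summable_imp_frequently_index_mult_less) auto
  then show ?thesis
  proof (rule frequently_rev_mp)
    show "\<forall>\<^sub>F k in sequentially. real k * a k < \<epsilon> / (D + 1) \<longrightarrow> M k < \<epsilon>"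
      using assms(2)
    proof eventually_elim
      case (elim k)
      show ?case
      proof
        assume "real k * a k < \<epsilon> / (D + 1)"
        then have "D * (real k * a k) \<le> D * (\<epsilon> / (D + 1))"
          using \<open>0 \<le> D\<close> by (intro mult_left_mono) auto
        also have "\<dots> < \<epsilon>"
          using \<open>0 \<le> D\<close> \<open>0 < \<epsilon>\<close> by (simp add: field_simps)
        finally show "M k < \<epsilon>"
          using elim by linarith
      qed
    qed
  qed
qed

lemma summable_if_telescoping_bound:
  fixes a h :: "nat \<Rightarrow> real"
  assumes "\<forall>\<^sub>F k in sequentially. 0 \<le> a k \<and> a k \<le> h k - h (Suc k)"
    and "\<forall>\<^sub>F k in sequentially. B \<le> h k"
  shows "summable a"
proof -
  obtain N where N: "\<And>k. k \<ge> N \<Longrightarrow> 0 \<le> a k \<and> a k \<le> h k - h (Suc k) \<and> B \<le> h k"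
    using eventually_conj[OF assms] unfolding eventually_sequentially by blast
  have "decseq (\<lambda>k. h (k + N))"
  proof (rule decseq_SucI)
    show "h (Suc k + N) \<le> h (k + N)" for k
      using N[of "k + N"] by simp
  qed
  then obtain L where "(\<lambda>k. h (k + N)) \<longlonglongrightarrow> L"
    using N by (metis decseq_convergent le_add2)
  then have "summable (\<lambda>k. h (k + N) - h (Suc k + N))"
    using telescope_summable' by fastforce
  then have "summable (\<lambda>k. a (k + N))"
    by (rule summable_comparison_test'[where N = 0]) (use N in force)
  then show ?thesis by simp
qed

lemma eventually_less_if_frequently_less_decreasing:
  fixes h :: "nat \<Rightarrow> 'a::linorder"
  assumes "\<forall>\<^sub>F k in sequentially. h (Suc k) \<le> h k" and "\<exists>\<^sub>F k in sequentially. h k < c"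
  shows "\<forall>\<^sub>F k in sequentially. h k < c"
proof -
  obtain N where N: "\<And>k. k \<ge> N \<Longrightarrow> h (Suc k) \<le> h k"
    using assms(1) unfolding eventually_sequentially by blast
  obtain K where K: "K \<ge> N" "h K < c"
    using assms(2) unfolding frequently_sequentially by blast
  have "h k \<le> h K" if "k \<ge> K" for k
    using that by (induction rule: dec_induct) (use N K in \<open>auto intro: order_trans\<close>)
  then show ?thesis
    unfolding eventually_sequentially using K by (meson le_less_trans)
qed

lemma lyapunov_tendsto_zero:
  fixes E M G a :: "nat \<Rightarrow> real"
  assumes descent: "\<forall>\<^sub>F k in sequentially. 0 \<le> a k \<and> E (Suc k) \<le> E k - a k"
    and M_bound: "\<forall>\<^sub>F k in sequentially. 0 \<le> M k \<and> M k \<le> D * real k * a k"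
    and lower: "\<forall>\<^sub>F k in sequentially. c * M k - G k \<le> E k"
    and upper: "\<forall>\<^sub>F k in sequentially. E k \<le> C * M k + G k"
    and "G \<longlonglongrightarrow> 0" and "0 < c" and "0 \<le> C" and "0 \<le> D"
  shows "M \<longlonglongrightarrow> 0"
proof (rule order_tendstoI)
  show "\<forall>\<^sub>F k in sequentially. e < M k" if "e < 0" for e
    using M_bound by eventually_elim (use that in auto)
  fix \<epsilon> :: real assume "0 < \<epsilon>"
  define \<delta> where "\<delta> = c * \<epsilon> / (C + 2)"
  have "0 < \<delta>" using \<open>0 < \<epsilon>\<close> \<open>0 < c\<close> \<open>0 \<le> C\<close> by (simp add: \<delta>_def)
  have G_small: "\<forall>\<^sub>F k in sequentially. G k < \<delta>" and G_bounded: "\<forall>\<^sub>F k in sequentially. G k < 1"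
    using \<open>G \<longlonglongrightarrow> 0\<close> \<open>0 < \<delta>\<close> by (auto simp: order_tendsto_iff)
  have "summable a"
  proof (rule summable_if_telescoping_bound)
    show "\<forall>\<^sub>F k in sequentially. 0 \<le> a k \<and> a k \<le> E k - E (Suc k)"
      using descent by eventually_elim auto
    show "\<forall>\<^sub>F k in sequentially. -1 \<le> E k"
      using lower M_bound G_bounded
      by eventually_elim (use \<open>0 < c\<close> in \<open>smt (verit) mult_nonneg_nonneg\<close>)
  qed
  then have "\<exists>\<^sub>F k in sequentially. M k < \<delta>"
    using M_bound \<open>0 \<le> D\<close> \<open>0 < \<delta>\<close>
    by (intro summable_imp_frequently_less[where D = D]) (auto elim: eventually_mono simp: mult.assoc)
  then have "\<exists>\<^sub>F k in sequentially. E k < (C + 1) * \<delta>"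
  proof (rule frequently_rev_mp)
    show "\<forall>\<^sub>F k in sequentially. M k < \<delta> \<longrightarrow> E k < (C + 1) * \<delta>"
      using upper G_small
    proof eventually_elim
      case (elim k)
      show ?case
      proof
        assume "M k < \<delta>"
        then have "C * M k \<le> C * \<delta>"
          using \<open>0 \<le> C\<close> by (intro mult_left_mono) auto
        then show "E k < (C + 1) * \<delta>"
          using elim by (simp add: algebra_simps)
      qed
    qed
  qed
  then have "\<forall>\<^sub>F k in sequentially. E k < (C + 1) * \<delta>"
    using descent by (intro eventually_less_if_frequently_less_decreasing) (auto elim: eventually_mono)
  then show "\<forall>\<^sub>F k in sequentially. M k < \<epsilon>"
    using lower G_small
  proof eventually_elim
    case (elim k)
    then have "c * M k < (C + 1) * \<delta> + \<delta>"
      by linarith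
    also have "\<dots> = (C + 2) * \<delta>"
      by (simp add: algebra_simps)
    also have "\<dots> = c * \<epsilon>"
      using \<open>0 \<le> C\<close> by (simp add: \<delta>_def)
    finally show ?case using \<open>0 < c\<close> by simp
  qed
qed

lemma relaxation_tendsto_zero:
  fixes u v q :: "nat \<Rightarrow> real"
  assumes step: "\<forall>\<^sub>F k in sequentially. u (Suc k) \<le> (1 - q k) * u k + q k * v k"
    and weights: "\<forall>\<^sub>F k in sequentially. \<kappa> / real k \<le> q k \<and> q k \<le> 1"
    and "0 < \<kappa>" and "v \<longlonglongrightarrow> 0" and "\<And>k. 0 \<le> u k"
  shows "u \<longlonglongrightarrow> 0"
proof (rule order_tendstoI)
  show "\<forall>\<^sub>F k in sequentially. e < u k" if "e < 0" for e
    by (intro always_eventually allI) (meson assms(5) less_le_trans that)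
  fix e :: real assume "0 < e"
  define \<epsilon> where "\<epsilon> = e / 2"
  define w where "w k = max (u k - \<epsilon>) 0" for k
  have "0 < \<epsilon>" using \<open>0 < e\<close> by (simp add: \<epsilon>_def)
  have q_nonneg: "\<forall>\<^sub>F k in sequentially. 0 \<le> q k"
    using weights by eventually_elim (use \<open>0 < \<kappa>\<close> in \<open>auto intro: order_trans[rotated]\<close>)
  have w_step: "\<forall>\<^sub>F k in sequentially. w (Suc k) \<le> (1 - q k) * w k"
    using step weights q_nonneg order_tendstoD(2)[OF \<open>v \<longlonglongrightarrow> 0\<close> \<open>0 < \<epsilon>\<close>]
  proof eventually_elim
    case (elim k)
    then have "u (Suc k) - \<epsilon> \<le> (1 - q k) * (u k - \<epsilon>)"
      using mult_left_mono[of "v k" \<epsilon> "q k"] by (simp add: algebra_simps)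
    moreover have "(1 - q k) * (u k - \<epsilon>) \<le> (1 - q k) * w k"
      using elim by (intro mult_left_mono) (auto simp: w_def)
    moreover have "0 \<le> (1 - q k) * w k"
      using elim by (simp add: w_def)
    ultimately show ?case by (simp add: w_def)
  qed
  have w_decreasing: "\<forall>\<^sub>F k in sequentially. 0 \<le> q k * w k \<and> q k * w k \<le> w k - w (Suc k)"
    using w_step q_nonneg by eventually_elim (auto simp: w_def algebra_simps)
  then have "summable (\<lambda>k. q k * w k)"
    by (rule summable_if_telescoping_bound[where B = 0]) (simp add: w_def)
  moreover have "\<forall>\<^sub>F k in sequentially. w k \<le> 1 / \<kappa> * (real k * (q k * w k))"
    using weights eventually_gt_at_top[of 0]
  proof eventually_elim
    case (elim k)
    then have "\<kappa> * w k \<le> real k * q k * w k"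
      by (intro mult_right_mono) (auto simp: w_def field_simps)
    then show ?case
      using \<open>0 < \<kappa>\<close> by (simp add: field_simps)
  qed
  ultimately have "\<exists>\<^sub>F k in sequentially. w k < \<epsilon>"
    by (rule summable_imp_frequently_less[where D = "1 / \<kappa>"]) (use \<open>0 < \<kappa>\<close> \<open>0 < \<epsilon>\<close> in auto)
  then have "\<forall>\<^sub>F k in sequentially. w k < \<epsilon>"
    using w_decreasing by (intro eventually_less_if_frequently_less_decreasing) (auto elim: eventually_mono)
  then show "\<forall>\<^sub>F k in sequentially. u k < e"
    by eventually_elim (use \<open>0 < e\<close> in \<open>auto simp: w_def \<epsilon>_def max_def split: if_splits\<close>)
qed

lemma smallo_inverse_if_tendsto_zero:
  fixes g h :: "nat \<Rightarrow> real"
  assumes "(\<lambda>k. g k * h k) \<longlonglongrightarrow> 0" and "\<forall>\<^sub>F k in sequentially. h k \<noteq> 0"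
  shows "g \<in> o(\<lambda>k. 1 / h k)"
  using assms by (intro smalloI_tendsto) (auto elim: eventually_mono)

section \<open>Inertial extrapolation\<close>

lemma norm_add_sq_bounds:
  fixes u v :: "'a::real_normed_vector"
  shows "(norm u)\<^sup>2 / 2 - (norm v)\<^sup>2 \<le> (norm (u + v))\<^sup>2"
    and "(norm (u + v))\<^sup>2 \<le> 2 * (norm u)\<^sup>2 + 2 * (norm v)\<^sup>2"
proof -
  have "norm u \<le> norm (u + v) + norm v"
    by (metis add_diff_cancel_right' norm_triangle_ineq4)
  then have "(norm u)\<^sup>2 \<le> (norm (u + v) + norm v)\<^sup>2"
    by (simp add: power_mono)
  also have "\<dots> \<le> 2 * (norm (u + v))\<^sup>2 + 2 * (norm v)\<^sup>2"
    using zero_le_power2[of "norm (u + v) - norm v"] by (simp add: power2_eq_square algebra_simps)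
  finally show "(norm u)\<^sup>2 / 2 - (norm v)\<^sup>2 \<le> (norm (u + v))\<^sup>2"
    by simp
  have "(norm (u + v))\<^sup>2 \<le> (norm u + norm v)\<^sup>2"
    by (simp add: norm_triangle_ineq power_mono)
  also have "\<dots> \<le> 2 * (norm u)\<^sup>2 + 2 * (norm v)\<^sup>2"
    using zero_le_power2[of "norm u - norm v"] by (simp add: power2_eq_square algebra_simps)
  finally show "(norm (u + v))\<^sup>2 \<le> 2 * (norm u)\<^sup>2 + 2 * (norm v)\<^sup>2" .
qed

definition inertial_point :: "(nat \<Rightarrow> real) \<Rightarrow> (nat \<Rightarrow> 'a::real_vector) \<Rightarrow> nat \<Rightarrow> 'a" where
  "inertial_point t z k = z (k - 1) + t k *\<^sub>R (z k - z (k - 1))"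

definition inertial_potential ::
  "real \<Rightarrow> (nat \<Rightarrow> real) \<Rightarrow> (nat \<Rightarrow> 'a::real_inner) \<Rightarrow> 'a \<Rightarrow> nat \<Rightarrow> real" where
  "inertial_potential \<eta> t z zs k =
     (norm (inertial_point t z k - zs))\<^sup>2
     - (1 - \<eta>) * (t k * (norm (z k - zs))\<^sup>2 - (t k - 1) * (norm (z (k - 1) - zs))\<^sup>2)"

lemma inertial_point_diff:
  assumes "t (Suc k) \<noteq> 0"
  shows "inertial_point t z (Suc k) - inertial_point t z k = t (Suc k) *\<^sub>R (z (Suc k) - extrap t z k)"
proof -
  have "t (Suc k) *\<^sub>R (((t k - 1) / t (Suc k)) *\<^sub>R (z k - z (k - 1))) = (t k - 1) *\<^sub>R (z k - z (k - 1))"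
    using assms by simp
  then show ?thesis
    by (simp add: inertial_point_def extrap_def algebra_simps)
qed

lemma inertial_potential_descent:
  fixes z :: "nat \<Rightarrow> 'a::real_inner"
  assumes "0 < \<eta>" and "\<eta> \<le> 1" and "0 \<le> t (Suc k)"
  defines "dP \<equiv> inertial_point t z (Suc k) - inertial_point t z k"
  shows "2 * \<eta> * (dP \<bullet> (zs - (z k + (t (Suc k) / \<eta>) *\<^sub>R (z (Suc k) - z k))))
    \<le> inertial_potential \<eta> t z zs k - inertial_potential \<eta> t z zs (Suc k) - (norm dP)\<^sup>2
       - (1 - \<eta>) * (t k - 1) * (norm (z k - z (k - 1)))\<^sup>2"
proof -
  define a b c where "a = z (k - 1) - zs" and "b = z k - zs" and "c = z (Suc k) - zs"
  define \<tau> s where "\<tau> = t (Suc k)" and "s = t k"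
  have V: "inertial_potential \<eta> t z zs k
      = (norm (a + s *\<^sub>R (b - a)))\<^sup>2 - (1 - \<eta>) * (s * (norm b)\<^sup>2 - (s - 1) * (norm a)\<^sup>2)"
    "inertial_potential \<eta> t z zs (Suc k)
      = (norm (b + \<tau> *\<^sub>R (c - b)))\<^sup>2 - (1 - \<eta>) * (\<tau> * (norm c)\<^sup>2 - (\<tau> - 1) * (norm b)\<^sup>2)"
    by (simp_all add: inertial_potential_def inertial_point_def a_def b_def c_def \<tau>_def s_def algebra_simps)
  have dP: "dP = (b + \<tau> *\<^sub>R (c - b)) - (a + s *\<^sub>R (b - a))"
    by (simp add: dP_def inertial_point_def a_def b_def c_def \<tau>_def s_def algebra_simps)
  have "2 * \<eta> * (dP \<bullet> (zs - (z k + (\<tau> / \<eta>) *\<^sub>R (z (Suc k) - z k))))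
      = dP \<bullet> ((- 2 * \<eta>) *\<^sub>R b - (2 * \<tau>) *\<^sub>R (c - b))"
    using assms(1) by (simp add: b_def c_def algebra_simps)
  also have "\<dots> = inertial_potential \<eta> t z zs k - inertial_potential \<eta> t z zs (Suc k) - (norm dP)\<^sup>2
       - (1 - \<eta>) * (s - 1) * (norm (b - a))\<^sup>2 - (1 - \<eta>) * \<tau> * (norm (c - b))\<^sup>2"
    unfolding V dP power2_norm_eq_inner by (simp add: inner_commute algebra_simps)
  finally have "2 * \<eta> * (dP \<bullet> (zs - (z k + (\<tau> / \<eta>) *\<^sub>R (z (Suc k) - z k))))
      = inertial_potential \<eta> t z zs k - inertial_potential \<eta> t z zs (Suc k) - (norm dP)\<^sup>2
       - (1 - \<eta>) * (t k - 1) * (norm (z k - z (k - 1)))\<^sup>2 - (1 - \<eta>) * \<tau> * (norm (c - b))\<^sup>2"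
    by (simp add: a_def b_def s_def)
  moreover have "0 \<le> (1 - \<eta>) * \<tau> * (norm (c - b))\<^sup>2"
    using assms(2,3) by (simp add: \<tau>_def)
  ultimately show ?thesis by (simp add: \<tau>_def)
qed

lemma inertial_potential_bounds:
  fixes z :: "nat \<Rightarrow> 'a::real_inner" and zs :: 'a
  assumes "1 \<le> t k" and "0 \<le> \<eta>" and "\<eta> \<le> 1"
  defines "D \<equiv> ((t k - 1) * norm (z k - z (k - 1)))\<^sup>2"
    and "g \<equiv> (norm (z k - zs))\<^sup>2 + (norm (z (k - 1) - zs))\<^sup>2"
  shows "D / 4 - 5 * g \<le> inertial_potential \<eta> t z zs k"
    and "inertial_potential \<eta> t z zs k \<le> 3 * D + 5 * g"
proof -
  define a a0 d p where "a = norm (z k - zs)" and "a0 = norm (z (k - 1) - zs)"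
    and "d = (t k - 1) * norm (z k - z (k - 1))" and "p = norm (inertial_point t z k - zs)"
  have "d = norm ((t k - 1) *\<^sub>R (z k - z (k - 1)))"
    using assms(1) by (simp add: d_def)
  moreover have "inertial_point t z k - zs = (t k - 1) *\<^sub>R (z k - z (k - 1)) + (z k - zs)"
    by (simp add: inertial_point_def algebra_simps)
  ultimately have p_sq: "d\<^sup>2 / 2 - a\<^sup>2 \<le> p\<^sup>2" "p\<^sup>2 \<le> 2 * d\<^sup>2 + 2 * a\<^sup>2"
    unfolding p_def a_def by (metis norm_add_sq_bounds)+
  have "0 \<le> a" "0 \<le> a0"
    by (simp_all add: a_def a0_def)
  have "\<bar>t k * a\<^sup>2 - (t k - 1) * a0\<^sup>2\<bar> \<le> d\<^sup>2 / 4 + 3 * (a\<^sup>2 + a0\<^sup>2)"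
  proof -
    have "\<bar>a - a0\<bar> \<le> norm (z k - z (k - 1))"
      unfolding a_def a0_def by (metis norm_triangle_ineq3 diff_diff_eq2 diff_add_cancel)
    then have "\<bar>(t k - 1) * (a - a0)\<bar> \<le> d"
      using assms(1) by (simp add: d_def abs_mult mult_left_mono)
    then have "\<bar>(t k - 1) * (a - a0) * (a + a0)\<bar> \<le> d * (a + a0)"
      using \<open>0 \<le> a\<close> \<open>0 \<le> a0\<close> by (simp add: abs_mult mult_right_mono)
    moreover have "d * (a + a0) \<le> d\<^sup>2 / 4 + 2 * (a\<^sup>2 + a0\<^sup>2)"
      using zero_le_power2[of "d / 2 - (a + a0)"] zero_le_power2[of "a - a0"]
      by (simp add: power2_eq_square algebra_simps)
    moreover have "t k * a\<^sup>2 - (t k - 1) * a0\<^sup>2 = a\<^sup>2 + (t k - 1) * (a - a0) * (a + a0)"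
      by (simp add: power2_eq_square algebra_simps)
    ultimately show ?thesis by (smt (verit) zero_le_power2)
  qed
  moreover have "\<bar>(1 - \<eta>) * (t k * a\<^sup>2 - (t k - 1) * a0\<^sup>2)\<bar> \<le> \<bar>t k * a\<^sup>2 - (t k - 1) * a0\<^sup>2\<bar>"
    using assms(2,3) by (simp add: abs_mult mult_left_le_one_le)
  ultimately have T: "\<bar>(1 - \<eta>) * (t k * a\<^sup>2 - (t k - 1) * a0\<^sup>2)\<bar> \<le> d\<^sup>2 / 4 + 3 * (a\<^sup>2 + a0\<^sup>2)"
    by linarith
  have V: "inertial_potential \<eta> t z zs k = p\<^sup>2 - (1 - \<eta>) * (t k * a\<^sup>2 - (t k - 1) * a0\<^sup>2)"
    by (simp add: inertial_potential_def p_def a_def a0_def)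
  have "D = d\<^sup>2" and "g = a\<^sup>2 + a0\<^sup>2"
    by (simp_all add: D_def g_def d_def a_def a0_def)
  then show "D / 4 - 5 * g \<le> inertial_potential \<eta> t z zs k"
    and "inertial_potential \<eta> t z zs k \<le> 3 * D + 5 * g"
    using abs_le_D1[OF T] abs_le_D2[OF T] p_sq zero_le_power2[of a] zero_le_power2[of a0] zero_le_power2[of d]
    unfolding V by argo+
qed

lemma LIMSEQ_shift_back:
  assumes "z \<longlonglongrightarrow> l"
  shows "(\<lambda>k. z (k - 1)) \<longlonglongrightarrow> l"
  using filterlim_compose[OF assms filterlim_minus_const_nat_at_top[of 1]] by (simp add: o_def)

lemma inertial_point_tendsto:
  fixes z :: "nat \<Rightarrow> 'a::real_normed_vector"
  assumes "z \<longlonglongrightarrow> l" and "(\<lambda>k. (t k - 1) * norm (z k - z (k - 1))) \<longlonglongrightarrow> 0"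
    and "\<forall>\<^sub>F k in sequentially. 1 \<le> t k"
  shows "inertial_point t z \<longlonglongrightarrow> l"
proof -
  have "(\<lambda>k. inertial_point t z k - l) \<longlonglongrightarrow> 0"
  proof (rule Lim_null_comparison)
    show "\<forall>\<^sub>F k in sequentially. norm (inertial_point t z k - l)
        \<le> norm (z k - l) + (t k - 1) * norm (z k - z (k - 1))"
      using assms(3)
    proof eventually_elim
      case (elim k)
      have "inertial_point t z k - l = (z k - l) + (t k - 1) *\<^sub>R (z k - z (k - 1))"
        by (simp add: inertial_point_def algebra_simps)
      then show ?case
        using elim by (metis abs_of_nonneg diff_ge_0_iff_ge norm_scaleR norm_triangle_ineq)
    qed
    show "(\<lambda>k. norm (z k - l) + (t k - 1) * norm (z k - z (k - 1))) \<longlonglongrightarrow> 0"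
      using tendsto_add[OF tendsto_norm_zero[OF LIM_zero[OF assms(1)]] assms(2)] by simp
  qed
  then show ?thesis by (simp add: LIM_zero_iff)
qed

lemma inertial_step_tendsto_zero:
  fixes z :: "nat \<Rightarrow> 'a::real_normed_vector"
  assumes "z \<longlonglongrightarrow> l" and "(\<lambda>k. (t k - 1) * norm (z k - z (k - 1))) \<longlonglongrightarrow> 0"
  shows "(\<lambda>k. t k * norm (z k - z (k - 1))) \<longlonglongrightarrow> 0"
proof -
  have "(\<lambda>k. z k - z (k - 1)) \<longlonglongrightarrow> l - l"
    by (intro tendsto_diff assms(1) LIMSEQ_shift_back)
  then have "(\<lambda>k. (t k - 1) * norm (z k - z (k - 1)) + norm (z k - z (k - 1))) \<longlonglongrightarrow> 0 + 0"
    by (intro tendsto_add assms(2)) (simp add: tendsto_norm_zero_iff)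
  then show ?thesis by (simp add: algebra_simps)
qed

section \<open>The accelerated augmented Lagrangian method\<close>

lemma subproblem_obj_min_variational_ineq:
  fixes g :: "real^'n \<Rightarrow> real" and A :: "real^'n^'m"
  assumes "convex_on UNIV g"
    and "\<And>y. subproblem_obj g A b \<beta> \<gamma> \<delta> \<eta> t x lam k z \<le> subproblem_obj g A b \<beta> \<gamma> \<delta> \<eta> t x lam k y"
  shows "0 \<le> g y - g z + \<beta> * ((A *v z - b) \<bullet> (A *v (y - z)))
           + 1 / \<gamma> * ((z - extrap t x k) \<bullet> (y - z))
           + (p_k \<eta> t lam k + (\<delta> * c_k \<eta> t k) *\<^sub>R (c_k \<eta> t k *\<^sub>R (A *v z) - r_k \<eta> t A b x k))
               \<bullet> (A *v (y - z))"
proof -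
  define c r p xb where "c = c_k \<eta> t k" and "r = r_k \<eta> t A b x k" and "p = p_k \<eta> t lam k"
    and "xb = extrap t x k"
  define h where "h y = \<beta> / 2 * (norm (A *v y - b))\<^sup>2 + 1 / (2 * \<gamma>) * (norm (y - xb))\<^sup>2
      + p \<bullet> (A *v y - b) + \<delta> / 2 * (norm (c *\<^sub>R (A *v y) - r))\<^sup>2" for y
  have "((\<lambda>y. A *v y) has_derivative (\<lambda>v. A *v v)) (at z)"
    by (simp add: bounded_linear_imp_has_derivative)
  then have dA: "((\<lambda>y. A *v y - b) has_derivative (\<lambda>v. A *v v)) (at z)"
    and dcA: "((\<lambda>y. c *\<^sub>R (A *v y) - r) has_derivative (\<lambda>v. c *\<^sub>R (A *v v))) (at z)"
    by (auto intro!: derivative_eq_intros)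
  have dI: "((\<lambda>y. y - xb) has_derivative (\<lambda>v. v)) (at z)"
    by (auto intro!: derivative_eq_intros)
  have "(h has_derivative (\<lambda>v. \<beta> / 2 * (2 * ((A *v z - b) \<bullet> (A *v v)))
      + 1 / (2 * \<gamma>) * (2 * ((z - xb) \<bullet> v)) + (p \<bullet> (A *v v) + 0 \<bullet> (A *v z - b))
      + \<delta> / 2 * (2 * ((c *\<^sub>R (A *v z) - r) \<bullet> (c *\<^sub>R (A *v v)))))) (at z)"
    unfolding h_def
    by (intro has_derivative_add has_derivative_mult_right has_derivative_norm_sq has_derivative_inner
        dA dcA dI has_derivative_const)
  then have "0 \<le> g y - g z + (\<beta> / 2 * (2 * ((A *v z - b) \<bullet> (A *v (y - z))))
      + 1 / (2 * \<gamma>) * (2 * ((z - xb) \<bullet> (y - z))) + (p \<bullet> (A *v (y - z)) + 0 \<bullet> (A *v z - b))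
      + \<delta> / 2 * (2 * ((c *\<^sub>R (A *v z) - r) \<bullet> (c *\<^sub>R (A *v (y - z))))))"
    using assms by (intro convex_plus_smooth_min_variational_ineq)
      (auto simp: subproblem_obj_def h_def c_def r_def p_def xb_def algebra_simps)
  then show ?thesis
    by (simp add: c_def r_def p_def xb_def algebra_simps)
qed

locale accelerated_alm =
  fixes f :: "real^'n \<Rightarrow> real" and gradf :: "real^'n \<Rightarrow> real^'n"
    and A :: "real^'n^'m" and b :: "real^'m"
    and t :: "nat \<Rightarrow> real" and \<rho> \<eta> \<gamma> \<delta> \<beta> :: real
    and x :: "nat \<Rightarrow> real^'n" and lam :: "nat \<Rightarrow> real^'m"
    and xs :: "real^'n" and ls :: "real^'m"
  assumes f_convex: "convex_on UNIV f"
    and f_grad: "\<And>z. (f has_derivative (\<lambda>h. gradf z \<bullet> h)) (at z)"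
    and t_mono: "\<And>k. k \<ge> 1 \<Longrightarrow> t k \<le> t (k + 1)"
    and t1: "t 1 = 1"
    and t_rate: "\<And>k. k \<ge> 1 \<Longrightarrow> (t (k + 1))\<^sup>2 - (t k)\<^sup>2 \<le> \<rho> * t (k + 1)"
    and rho: "0 < \<rho>" "\<rho> < 1"
    and eta: "\<rho> < \<eta>" "\<eta> < 1"
    and gamma: "\<gamma> > 0" and delta: "\<delta> > 0" and beta: "\<beta> \<ge> 0"
    and x_update:
      "(\<forall>k\<ge>1. \<forall>y. subproblem_obj f A b \<beta> \<gamma> \<delta> \<eta> t x lam k (x (k + 1))
                    \<le> subproblem_obj f A b \<beta> \<gamma> \<delta> \<eta> t x lam k y)
       \<or> (\<exists>L>0. (\<forall>u v. norm (gradf u - gradf v) \<le> L * norm (u - v)) \<and> \<gamma> \<le> 1 / L \<and>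
           (\<forall>k\<ge>1. \<forall>y.
              subproblem_obj (\<lambda>z. gradf (extrap t x k) \<bullet> z) A b \<beta> \<gamma> \<delta> \<eta> t x lam k (x (k + 1))
              \<le> subproblem_obj (\<lambda>z. gradf (extrap t x k) \<bullet> z) A b \<beta> \<gamma> \<delta> \<eta> t x lam k y))"
    and lam_update: "\<And>k. k \<ge> 1 \<Longrightarrow>
       lam (k + 1) = extrap t lam k
         + \<delta> *\<^sub>R (c_k \<eta> t k *\<^sub>R (A *v x (k + 1)) - r_k \<eta> t A b x k)"
    and limit_kkt: "(xs, ls) \<in> kkt_set gradf A b"
begin

lemma eta_pos: "0 < \<eta>"
  using rho eta by linarith

lemma t_ge_1: "1 \<le> k \<Longrightarrow> 1 \<le> t k"
proof (induction k rule: nat_induct_at_least)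
  case (Suc k)
  then show ?case using t_mono[of k] by simp
qed (simp add: t1[unfolded One_nat_def])

lemma t_pos: "1 \<le> k \<Longrightarrow> 0 < t k"
  using t_ge_1 by fastforce

lemma t_le_index: "1 \<le> k \<Longrightarrow> t k \<le> real k"
proof (induction k rule: nat_induct_at_least)
  case (Suc k)
  have "(t (Suc k) - t k) * (t (Suc k) + t k) \<le> 1 * (t (Suc k) + t k)"
    using t_rate[OF Suc.hyps] rho t_pos[OF Suc.hyps] t_pos[of "Suc k"]
    by (simp add: power2_eq_square algebra_simps) (smt (verit) mult_left_le_one_le)
  then have "t (Suc k) - t k \<le> 1"
    using t_pos[OF Suc.hyps] t_pos[of "Suc k"] by (simp add: mult_le_cancel_right)
  then show ?case using Suc.IH by simp
qed (simp add: t1[unfolded One_nat_def])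

lemma t_rate_coefficient:
  assumes "1 \<le> k"
  shows "t (Suc k) * (t (Suc k) / \<eta> - 1) \<le> ((t k)\<^sup>2 - (\<eta> - \<rho>) * t k) / \<eta>"
proof -
  have "(t (Suc k))\<^sup>2 - \<eta> * t (Suc k) \<le> (t k)\<^sup>2 - (\<eta> - \<rho>) * t (Suc k)"
    using t_rate[OF assms] by (simp add: left_diff_distrib)
  also have "\<dots> \<le> (t k)\<^sup>2 - (\<eta> - \<rho>) * t k"
    using t_mono[OF assms] eta by (simp add: mult_left_mono)
  finally have "((t (Suc k))\<^sup>2 - \<eta> * t (Suc k)) / \<eta> \<le> ((t k)\<^sup>2 - (\<eta> - \<rho>) * t k) / \<eta>"
    using eta_pos by (simp add: divide_right_mono)
  moreover have "t (Suc k) * (t (Suc k) / \<eta> - 1) = ((t (Suc k))\<^sup>2 - \<eta> * t (Suc k)) / \<eta>"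
    using eta_pos by (simp add: field_simps power2_eq_square)
  ultimately show ?thesis by simp
qed

lemma A_xs: "A *v xs = b" and grad_xs: "gradf xs = - (transpose A *v ls)"
  using limit_kkt by (auto simp: kkt_set_def eq_neg_iff_add_eq_0)

definition "x_hat k = x k + c_k \<eta> t k *\<^sub>R (x (Suc k) - x k)"
definition "lam_hat k = lam k + c_k \<eta> t k *\<^sub>R (lam (Suc k) - lam k)"

lemma alpha_k_eq: "alpha_k \<eta> t k = c_k \<eta> t k - 1"
  using eta_pos by (simp add: alpha_k_def c_k_def field_simps)

lemma A_x_hat: "c_k \<eta> t k *\<^sub>R (A *v x (Suc k)) - r_k \<eta> t A b x k = A *v x_hat k - b"
  by (simp add: x_hat_def r_k_def alpha_k_eq algebra_simps)

lemma lam_hat_eq: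
  assumes "1 \<le> k"
  shows "p_k \<eta> t lam k + (\<delta> * c_k \<eta> t k) *\<^sub>R (c_k \<eta> t k *\<^sub>R (A *v x (Suc k)) - r_k \<eta> t A b x k)
    = lam_hat k"
proof -
  have "(\<delta> * c_k \<eta> t k) *\<^sub>R (c_k \<eta> t k *\<^sub>R (A *v x (Suc k)) - r_k \<eta> t A b x k)
      = c_k \<eta> t k *\<^sub>R (lam (Suc k) - extrap t lam k)"
    using lam_update[OF assms] by simp
  then show ?thesis
    by (simp add: lam_hat_def p_k_def alpha_k_eq algebra_simps)
qed

lemma x_update_variational_ineq:
  assumes "1 \<le> k"
  shows "- 1 / (2 * \<gamma>) * (norm (x (Suc k) - extrap t x k))\<^sup>2
    \<le> f y - f (x (Suc k)) + \<beta> * ((A *v x (Suc k) - b) \<bullet> (A *v (y - x (Suc k))))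
       + 1 / \<gamma> * ((x (Suc k) - extrap t x k) \<bullet> (y - x (Suc k)))
       + lam_hat k \<bullet> (A *v (y - x (Suc k)))"
  using x_update
proof
  assume "\<forall>k\<ge>1. \<forall>y. subproblem_obj f A b \<beta> \<gamma> \<delta> \<eta> t x lam k (x (k + 1))
                    \<le> subproblem_obj f A b \<beta> \<gamma> \<delta> \<eta> t x lam k y"
  then have "subproblem_obj f A b \<beta> \<gamma> \<delta> \<eta> t x lam k (x (Suc k))
      \<le> subproblem_obj f A b \<beta> \<gamma> \<delta> \<eta> t x lam k y'" for y'
    using assms by simp
  from subproblem_obj_min_variational_ineq[OF f_convex this]
  have "0 \<le> f y - f (x (Suc k)) + \<beta> * ((A *v x (Suc k) - b) \<bullet> (A *v (y - x (Suc k))))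
       + 1 / \<gamma> * ((x (Suc k) - extrap t x k) \<bullet> (y - x (Suc k)))
       + lam_hat k \<bullet> (A *v (y - x (Suc k)))"
    by (simp add: lam_hat_eq[OF assms])
  moreover have "0 \<le> 1 / (2 * \<gamma>) * (norm (x (Suc k) - extrap t x k))\<^sup>2"
    using gamma by simp
  ultimately show ?thesis by linarith
next
  assume "\<exists>L>0. (\<forall>u v. norm (gradf u - gradf v) \<le> L * norm (u - v)) \<and> \<gamma> \<le> 1 / L \<and>
           (\<forall>k\<ge>1. \<forall>y.
              subproblem_obj (\<lambda>z. gradf (extrap t x k) \<bullet> z) A b \<beta> \<gamma> \<delta> \<eta> t x lam k (x (k + 1))
              \<le> subproblem_obj (\<lambda>z. gradf (extrap t x k) \<bullet> z) A b \<beta> \<gamma> \<delta> \<eta> t x lam k y)"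
  then obtain L where L: "0 < L" "\<And>u v. norm (gradf u - gradf v) \<le> L * norm (u - v)" "\<gamma> \<le> 1 / L"
    and min: "\<forall>k\<ge>1. \<forall>y.
              subproblem_obj (\<lambda>z. gradf (extrap t x k) \<bullet> z) A b \<beta> \<gamma> \<delta> \<eta> t x lam k (x (k + 1))
              \<le> subproblem_obj (\<lambda>z. gradf (extrap t x k) \<bullet> z) A b \<beta> \<gamma> \<delta> \<eta> t x lam k y"
    by blast
  define xb xn where "xb = extrap t x k" and "xn = x (Suc k)"
  have "convex_on UNIV (\<lambda>z. gradf xb \<bullet> z)"
    by (rule convex_onI) (auto simp: inner_add_right)
  moreover have "subproblem_obj (\<lambda>z. gradf xb \<bullet> z) A b \<beta> \<gamma> \<delta> \<eta> t x lam k xn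
      \<le> subproblem_obj (\<lambda>z. gradf xb \<bullet> z) A b \<beta> \<gamma> \<delta> \<eta> t x lam k y'" for y'
    using min assms by (simp add: xb_def xn_def)
  ultimately have "0 \<le> gradf xb \<bullet> y - gradf xb \<bullet> xn + \<beta> * ((A *v xn - b) \<bullet> (A *v (y - xn)))
       + 1 / \<gamma> * ((xn - extrap t x k) \<bullet> (y - xn))
       + (p_k \<eta> t lam k + (\<delta> * c_k \<eta> t k) *\<^sub>R (c_k \<eta> t k *\<^sub>R (A *v xn) - r_k \<eta> t A b x k))
           \<bullet> (A *v (y - xn))"
    by (rule subproblem_obj_min_variational_ineq)
  then have "0 \<le> gradf xb \<bullet> y - gradf xb \<bullet> xn + \<beta> * ((A *v xn - b) \<bullet> (A *v (y - xn)))
       + 1 / \<gamma> * ((xn - xb) \<bullet> (y - xn)) + lam_hat k \<bullet> (A *v (y - xn))"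
    by (simp add: lam_hat_eq[OF assms] xb_def xn_def)
  moreover have "gradf xb \<bullet> (y - xn) - 1 / (2 * \<gamma>) * (norm (xn - xb))\<^sup>2 \<le> f y - f xn"
    using L gamma by (intro lipschitz_gradient_three_point_ineq[OF f_convex f_grad]) auto
  ultimately show ?thesis
    unfolding xb_def[symmetric] xn_def[symmetric] by (simp add: inner_diff_right)
qed

definition "gap k = aug_lag f A b \<beta> (x k) ls - aug_lag f A b \<beta> xs ls"

lemma gap_eq: "gap k = f (x k) - f xs + ls \<bullet> (A *v x k - b) + \<beta> / 2 * (norm (A *v x k - b))\<^sup>2"
  by (simp add: gap_def aug_lag_def A_xs)

lemma gap_nonneg: "0 \<le> gap k"
proof -
  have "f xs + gradf xs \<bullet> (x k - xs) \<le> f (x k)"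
    by (rule convex_on_gradient_ineq[OF f_convex f_grad])
  moreover have "gradf xs \<bullet> (x k - xs) = - (ls \<bullet> (A *v x k - b))"
    by (simp add: grad_xs dot_lmul_matrix A_xs matrix_vector_mult_diff_distrib inner_diff_right)
  ultimately show ?thesis
    using beta by (simp add: gap_eq)
qed

lemma gap_recursion:
  assumes "1 \<le> k"
  defines "c \<equiv> c_k \<eta> t k"
  shows "c * gap (Suc k) \<le> (c - 1) * gap k
      + 1 / \<gamma> * ((x (Suc k) - extrap t x k) \<bullet> (xs - x_hat k))
      - (lam_hat k - ls) \<bullet> (A *v x_hat k - b)
      + c / (2 * \<gamma>) * (norm (x (Suc k) - extrap t x k))\<^sup>2"
proof -
  define xn xb P Pn W AW \<mu> \<epsilon> where "xn = x (Suc k)" and "xb = extrap t x k" and "P = A *v x k"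
    and "Pn = A *v xn" and "W = x_hat k" and "AW = A *v x_hat k" and "\<mu> = lam_hat k"
    and "\<epsilon> = 1 / (2 * \<gamma>) * (norm (xn - xb))\<^sup>2"
  define I1 where "I1 = f (x k) - f xn + \<beta> * ((Pn - b) \<bullet> (P - Pn))
      + 1 / \<gamma> * ((xn - xb) \<bullet> (x k - xn)) + \<mu> \<bullet> (P - Pn)"
  define I2 where "I2 = f xs - f xn + \<beta> * ((Pn - b) \<bullet> (b - Pn))
      + 1 / \<gamma> * ((xn - xb) \<bullet> (xs - xn)) + \<mu> \<bullet> (b - Pn)"
  have "- \<epsilon> \<le> I1" and "- \<epsilon> \<le> I2"
    using x_update_variational_ineq[OF assms(1), of "x k"] x_update_variational_ineq[OF assms(1), of xs]
    by (simp_all add: I1_def I2_def \<epsilon>_def xn_def xb_def P_def Pn_def \<mu>_def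
        matrix_vector_mult_diff_distrib A_xs)
  have "1 \<le> c"
    using t_ge_1[of "Suc k"] eta eta_pos by (simp add: c_def c_k_def le_divide_eq)
  have "(c - 1) * I1 + I2 = (c - 1) * gap k - c * gap (Suc k)
      + 1 / \<gamma> * ((xn - xb) \<bullet> (xs - W)) - (\<mu> - ls) \<bullet> (AW - b)
      - \<beta> / 2 * (c - 1) * (norm (P - Pn))\<^sup>2 - \<beta> / 2 * (norm (Pn - b))\<^sup>2"
  proof -
    have hat: "AW = P + c *\<^sub>R (Pn - P)" "W = x k + c *\<^sub>R (xn - x k)"
      by (simp_all add: W_def AW_def x_hat_def c_def xn_def P_def Pn_def algebra_simps)
    have gaps: "gap k = f (x k) - f xs + ls \<bullet> (P - b) + \<beta> / 2 * (norm (P - b))\<^sup>2"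
      "gap (Suc k) = f xn - f xs + ls \<bullet> (Pn - b) + \<beta> / 2 * (norm (Pn - b))\<^sup>2"
      by (simp_all add: gap_eq P_def Pn_def xn_def)
    show ?thesis
      using gamma unfolding I1_def I2_def hat gaps power2_norm_eq_inner
      by (simp add: inner_simps inner_commute field_simps)
  qed
  moreover have "(c - 1) * (- \<epsilon>) \<le> (c - 1) * I1"
    using \<open>- \<epsilon> \<le> I1\<close> \<open>1 \<le> c\<close> by (intro mult_left_mono) auto
  moreover have "0 \<le> \<beta> / 2 * (c - 1) * (norm (P - Pn))\<^sup>2" and "0 \<le> \<beta> / 2 * (norm (Pn - b))\<^sup>2"
    using beta \<open>1 \<le> c\<close> by simp_all
  moreover have "(c - 1) * (- \<epsilon>) = \<epsilon> - c / (2 * \<gamma>) * (norm (xn - xb))\<^sup>2"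
    using gamma by (simp add: \<epsilon>_def field_simps)
  ultimately have "c * gap (Suc k) \<le> (c - 1) * gap k + 1 / \<gamma> * ((xn - xb) \<bullet> (xs - W))
      - (\<mu> - ls) \<bullet> (AW - b) + c / (2 * \<gamma>) * (norm (xn - xb))\<^sup>2"
    using \<open>- \<epsilon> \<le> I2\<close> by linarith
  then show ?thesis
    by (simp add: xn_def xb_def \<mu>_def W_def AW_def)
qed

lemma gap_recursion_inertial:
  assumes "1 \<le> k"
  defines "dX \<equiv> inertial_point t x (Suc k) - inertial_point t x k"
    and "dL \<equiv> inertial_point t lam (Suc k) - inertial_point t lam k"
  shows "(t (Suc k))\<^sup>2 / \<eta> * gap (Suc k) \<le> ((t k)\<^sup>2 - (\<eta> - \<rho>) * t k) / \<eta> * gap k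
     + (dX \<bullet> (xs - x_hat k)) / \<gamma> + (dL \<bullet> (ls - lam_hat k)) / \<delta> + (norm dX)\<^sup>2 / (2 * \<eta> * \<gamma>)"
proof -
  define \<tau> c where "\<tau> = t (Suc k)" and "c = c_k \<eta> t k"
  define G0 G1 XT LT N where "G0 = gap k" and "G1 = gap (Suc k)"
    and "XT = 1 / \<gamma> * ((x (Suc k) - extrap t x k) \<bullet> (xs - x_hat k))"
    and "LT = (lam_hat k - ls) \<bullet> (A *v x_hat k - b)"
    and "N = c / (2 * \<gamma>) * (norm (x (Suc k) - extrap t x k))\<^sup>2"
  have "0 < \<tau>" and c: "c = \<tau> / \<eta>"
    using t_pos[of "Suc k"] by (simp_all add: \<tau>_def c_def c_k_def)
  have dX_eq: "dX = \<tau> *\<^sub>R (x (Suc k) - extrap t x k)"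
    unfolding dX_def \<tau>_def using \<open>0 < \<tau>\<close> by (simp add: \<tau>_def inertial_point_diff)
  have dL_eq: "dL = (\<tau> * \<delta>) *\<^sub>R (A *v x_hat k - b)"
    unfolding dL_def \<tau>_def using \<open>0 < \<tau>\<close> lam_update[OF assms(1)]
    by (simp add: \<tau>_def inertial_point_diff A_x_hat)
  have "\<tau> * (c * G1) \<le> \<tau> * ((c - 1) * G0 + XT - LT + N)"
    using gap_recursion[OF assms(1)] \<open>0 < \<tau>\<close>
    by (intro mult_left_mono) (simp_all add: c_def G0_def G1_def XT_def LT_def N_def)
  then have "\<tau> * (c * G1) \<le> \<tau> * ((c - 1) * G0) + \<tau> * XT - \<tau> * LT + \<tau> * N"
    by (simp only: distrib_left right_diff_distrib)
  moreover have "\<tau> * (c * G1) = (t (Suc k))\<^sup>2 / \<eta> * gap (Suc k)"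
    by (simp add: c \<tau>_def G1_def power2_eq_square)
  moreover have "\<tau> * ((c - 1) * G0) \<le> ((t k)\<^sup>2 - (\<eta> - \<rho>) * t k) / \<eta> * gap k"
    using mult_right_mono[OF t_rate_coefficient[OF assms(1)] gap_nonneg[of k]]
    by (simp add: c \<tau>_def G0_def mult.assoc)
  moreover have "\<tau> * XT = (dX \<bullet> (xs - x_hat k)) / \<gamma>"
    by (simp add: XT_def dX_eq)
  moreover have "\<tau> * LT = - (dL \<bullet> (ls - lam_hat k)) / \<delta>"
  proof -
    have "(A *v x_hat k - b) \<bullet> (ls - lam_hat k) = - LT"
      by (simp add: LT_def inner_commute inner_diff_left inner_diff_right)
    then show ?thesis
      using delta by (simp add: dL_eq)
  qed
  moreover have "\<tau> * N = (norm dX)\<^sup>2 / (2 * \<eta> * \<gamma>)"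
  proof -
    have "norm dX = \<tau> * norm (x (Suc k) - extrap t x k)"
      using \<open>0 < \<tau>\<close> by (simp add: dX_eq)
    then show ?thesis
      using eta_pos gamma by (simp add: N_def c power2_eq_square field_simps)
  qed
  ultimately show ?thesis by linarith
qed

definition "energy k = (t k)\<^sup>2 / \<eta> * gap k
  + inertial_potential \<eta> t x xs k / (2 * \<eta> * \<gamma>) + inertial_potential \<eta> t lam ls k / (2 * \<eta> * \<delta>)"

definition "energy_decrease k = (\<eta> - \<rho>) * t k * gap k / \<eta>
  + (1 - \<eta>) * (t k - 1) * (norm (x k - x (k - 1)))\<^sup>2 / (2 * \<eta> * \<gamma>)
  + (1 - \<eta>) * (t k - 1) * (norm (lam k - lam (k - 1)))\<^sup>2 / (2 * \<eta> * \<delta>)"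

lemma energy_descent:
  assumes "1 \<le> k"
  shows "energy (Suc k) \<le> energy k - energy_decrease k"
proof -
  define dX dL where "dX = inertial_point t x (Suc k) - inertial_point t x k"
    and "dL = inertial_point t lam (Suc k) - inertial_point t lam k"
  have hat: "x_hat k = x k + (t (Suc k) / \<eta>) *\<^sub>R (x (Suc k) - x k)"
    "lam_hat k = lam k + (t (Suc k) / \<eta>) *\<^sub>R (lam (Suc k) - lam k)"
    by (simp_all add: x_hat_def lam_hat_def c_k_def)
  have div: "X / w \<le> R / (2 * \<eta> * w)" if "2 * \<eta> * X \<le> R" and "0 < w" for X R w
  proof -
    have "X / w = (2 * \<eta> * X) / (2 * \<eta> * w)"
      using eta_pos by simp
    also have "\<dots> \<le> R / (2 * \<eta> * w)"
      using that eta_pos by (intro divide_right_mono) auto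
    finally show ?thesis .
  qed
  have "0 < \<eta>" "\<eta> \<le> 1" "0 \<le> t (Suc k)"
    using eta_pos eta t_pos[of "Suc k"] by simp_all
  then have "2 * \<eta> * (dX \<bullet> (xs - x_hat k)) \<le> inertial_potential \<eta> t x xs k
      - inertial_potential \<eta> t x xs (Suc k) - (norm dX)\<^sup>2 - (1 - \<eta>) * (t k - 1) * (norm (x k - x (k - 1)))\<^sup>2"
    and "2 * \<eta> * (dL \<bullet> (ls - lam_hat k)) \<le> inertial_potential \<eta> t lam ls k
      - inertial_potential \<eta> t lam ls (Suc k) - (norm dL)\<^sup>2 - (1 - \<eta>) * (t k - 1) * (norm (lam k - lam (k - 1)))\<^sup>2"
    unfolding dX_def dL_def hat by (rule inertial_potential_descent)+
  from div[OF this(1) gamma] div[OF this(2) delta]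
  have "(dX \<bullet> (xs - x_hat k)) / \<gamma> \<le> inertial_potential \<eta> t x xs k / (2 * \<eta> * \<gamma>)
      - inertial_potential \<eta> t x xs (Suc k) / (2 * \<eta> * \<gamma>) - (norm dX)\<^sup>2 / (2 * \<eta> * \<gamma>)
      - (1 - \<eta>) * (t k - 1) * (norm (x k - x (k - 1)))\<^sup>2 / (2 * \<eta> * \<gamma>)"
    and "(dL \<bullet> (ls - lam_hat k)) / \<delta> \<le> inertial_potential \<eta> t lam ls k / (2 * \<eta> * \<delta>)
      - inertial_potential \<eta> t lam ls (Suc k) / (2 * \<eta> * \<delta>) - (norm dL)\<^sup>2 / (2 * \<eta> * \<delta>)
      - (1 - \<eta>) * (t k - 1) * (norm (lam k - lam (k - 1)))\<^sup>2 / (2 * \<eta> * \<delta>)"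
    by (simp_all only: diff_divide_distrib)
  moreover have "0 \<le> (norm dL)\<^sup>2 / (2 * \<eta> * \<delta>)"
    using eta_pos delta by simp
  moreover have "((t k)\<^sup>2 - (\<eta> - \<rho>) * t k) / \<eta> * gap k
      = (t k)\<^sup>2 / \<eta> * gap k - (\<eta> - \<rho>) * t k * gap k / \<eta>"
    by (simp add: diff_divide_distrib left_diff_distrib)
  ultimately show ?thesis
    using gap_recursion_inertial[OF assms] unfolding energy_def energy_decrease_def dX_def dL_def
    by linarith
qed

definition "scaled_error k = (t k)\<^sup>2 / \<eta> * gap k
  + ((t k - 1) * norm (x k - x (k - 1)))\<^sup>2 / (2 * \<eta> * \<gamma>)
  + ((t k - 1) * norm (lam k - lam (k - 1)))\<^sup>2 / (2 * \<eta> * \<delta>)"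

definition "distance_error k =
  5 * ((norm (x k - xs))\<^sup>2 + (norm (x (k - 1) - xs))\<^sup>2) / (2 * \<eta> * \<gamma>)
  + 5 * ((norm (lam k - ls))\<^sup>2 + (norm (lam (k - 1) - ls))\<^sup>2) / (2 * \<eta> * \<delta>)"

lemma scaled_error_nonneg: "0 \<le> scaled_error k"
  using gap_nonneg[of k] eta_pos gamma delta by (simp add: scaled_error_def)

lemma energy_decrease_nonneg: "1 \<le> k \<Longrightarrow> 0 \<le> energy_decrease k"
  using gap_nonneg[of k] t_ge_1[of k] eta_pos eta gamma delta by (simp add: energy_decrease_def)

lemma energy_bounds:
  assumes "1 \<le> k"
  shows "scaled_error k / 4 - distance_error k \<le> energy k"
    and "energy k \<le> 3 * scaled_error k + distance_error k"
proof -
  have \<eta>: "0 \<le> \<eta>" "\<eta> \<le> 1" and "0 \<le> 2 * \<eta> * \<gamma>" "0 \<le> 2 * \<eta> * \<delta>"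
    using eta_pos eta gamma delta by simp_all
  note bx = inertial_potential_bounds[of t k \<eta> x xs, OF t_ge_1[OF assms] \<eta>]
  note bl = inertial_potential_bounds[of t k \<eta> lam ls, OF t_ge_1[OF assms] \<eta>]
  have split: "(a / 4 - 5 * g) / w = a / w / 4 - 5 * g / w" "(3 * a + 5 * g) / w = 3 * (a / w) + 5 * g / w"
    for a g w :: real
    by (simp_all add: diff_divide_distrib add_divide_distrib)
  have "0 \<le> (t k)\<^sup>2 / \<eta> * gap k"
    using gap_nonneg[of k] eta_pos by simp
  moreover note divide_right_mono[OF bx(1) \<open>0 \<le> 2 * \<eta> * \<gamma>\<close>, unfolded split]
    divide_right_mono[OF bx(2) \<open>0 \<le> 2 * \<eta> * \<gamma>\<close>, unfolded split]
    divide_right_mono[OF bl(1) \<open>0 \<le> 2 * \<eta> * \<delta>\<close>, unfolded split]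
    divide_right_mono[OF bl(2) \<open>0 \<le> 2 * \<eta> * \<delta>\<close>, unfolded split]
  ultimately show "scaled_error k / 4 - distance_error k \<le> energy k"
    and "energy k \<le> 3 * scaled_error k + distance_error k"
    by (simp_all only: scaled_error_def distance_error_def energy_def) argo+
qed

lemma scaled_error_le_decrease:
  assumes "1 \<le> k"
  shows "scaled_error k \<le> (1 / (\<eta> - \<rho>) + 1 / (1 - \<eta>)) * t k * energy_decrease k"
proof -
  define C a1 a2 a3 where "C = 1 / (\<eta> - \<rho>) + 1 / (1 - \<eta>)"
    and "a1 = (\<eta> - \<rho>) * t k * gap k / \<eta>"
    and "a2 = (1 - \<eta>) * (t k - 1) * (norm (x k - x (k - 1)))\<^sup>2 / (2 * \<eta> * \<gamma>)"
    and "a3 = (1 - \<eta>) * (t k - 1) * (norm (lam k - lam (k - 1)))\<^sup>2 / (2 * \<eta> * \<delta>)"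
  have "0 < \<eta> - \<rho>" "0 < 1 - \<eta>" "1 \<le> t k"
    using eta t_ge_1[OF assms] by simp_all
  then have "0 \<le> a1" "0 \<le> a2" "0 \<le> a3" and C: "1 / (\<eta> - \<rho>) \<le> C" "1 / (1 - \<eta>) \<le> C"
    using gap_nonneg[of k] eta_pos gamma delta by (simp_all add: a1_def a2_def a3_def C_def)
  have coefficient: "a / d \<le> C * a" if "1 / d \<le> C" and "0 \<le> a" for a d
    using mult_right_mono[OF that] by simp
  have "(t k)\<^sup>2 / \<eta> * gap k = t k * (a1 / (\<eta> - \<rho>))"
    using \<open>0 < \<eta> - \<rho>\<close> by (simp add: a1_def power2_eq_square)
  also have "\<dots> \<le> t k * (C * a1)"
    using coefficient[OF C(1) \<open>0 \<le> a1\<close>] \<open>1 \<le> t k\<close> by (intro mult_left_mono) auto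
  finally have "(t k)\<^sup>2 / \<eta> * gap k \<le> t k * (C * a1)" .
  moreover have "((t k - 1) * norm (x k - x (k - 1)))\<^sup>2 / (2 * \<eta> * \<gamma>) \<le> t k * (C * a2)"
    and "((t k - 1) * norm (lam k - lam (k - 1)))\<^sup>2 / (2 * \<eta> * \<delta>) \<le> t k * (C * a3)"
  proof -
    have "((t k - 1) * n)\<^sup>2 / w = (t k - 1) * ((1 - \<eta>) * (t k - 1) * n\<^sup>2 / w / (1 - \<eta>))" for n w :: real
      using \<open>0 < 1 - \<eta>\<close> by (simp add: power2_eq_square)
    moreover have "(t k - 1) * (a / (1 - \<eta>)) \<le> t k * (C * a)" if "0 \<le> a" for a
      using coefficient[OF C(2) that] that \<open>0 < 1 - \<eta>\<close> \<open>1 \<le> t k\<close> by (intro mult_mono) auto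
    ultimately show "((t k - 1) * norm (x k - x (k - 1)))\<^sup>2 / (2 * \<eta> * \<gamma>) \<le> t k * (C * a2)"
      and "((t k - 1) * norm (lam k - lam (k - 1)))\<^sup>2 / (2 * \<eta> * \<delta>) \<le> t k * (C * a3)"
      using \<open>0 \<le> a2\<close> \<open>0 \<le> a3\<close> unfolding a2_def a3_def by metis+
  qed
  ultimately show ?thesis
    unfolding scaled_error_def energy_decrease_def a1_def[symmetric] a2_def[symmetric] a3_def[symmetric]
      C_def[symmetric]
    by (simp add: algebra_simps)
qed

lemma inertial_point_lam_step:
  assumes "1 \<le> k"
  shows "(\<eta> / \<delta>) *\<^sub>R (inertial_point t lam (Suc k) - inertial_point t lam k)
    = (\<eta> * t (Suc k)) *\<^sub>R (A *v x k - b) + (t (Suc k))\<^sup>2 *\<^sub>R (A *v x (Suc k) - A *v x k)"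
proof -
  have "inertial_point t lam (Suc k) - inertial_point t lam k = t (Suc k) *\<^sub>R (lam (Suc k) - extrap t lam k)"
    using t_pos[of "Suc k"] by (simp add: inertial_point_diff)
  also have "lam (Suc k) - extrap t lam k = \<delta> *\<^sub>R (A *v x_hat k - b)"
    using lam_update[OF assms] A_x_hat[of k] by simp
  also have "A *v x_hat k - b = (A *v x k - b) + (t (Suc k) / \<eta>) *\<^sub>R (A *v x (Suc k) - A *v x k)"
    by (simp add: x_hat_def c_k_def algebra_simps)
  finally show ?thesis
    using eta_pos delta by (simp add: scaleR_add_right power2_eq_square)
qed

definition "relaxation_weight k = ((t k)\<^sup>2 + \<eta> * t (Suc k) - (t (Suc k))\<^sup>2) / (t k)\<^sup>2"

lemma relaxation_weight_bounds:
  assumes "1 \<le> k"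
  shows "(\<eta> - \<rho>) / real k \<le> relaxation_weight k" and "relaxation_weight k \<le> 1"
proof -
  have "0 < t k" "t k \<le> t (Suc k)"
    using t_pos[OF assms] t_mono[OF assms] by simp_all
  have "(\<eta> - \<rho>) / real k \<le> (\<eta> - \<rho>) / t k"
    using t_le_index[OF assms] \<open>0 < t k\<close> eta by (intro divide_left_mono) auto
  also have "\<dots> = (\<eta> - \<rho>) * t k / (t k)\<^sup>2"
    using \<open>0 < t k\<close> by (simp add: power2_eq_square)
  also have "\<dots> \<le> relaxation_weight k"
  proof -
    have "(\<eta> - \<rho>) * t k \<le> (\<eta> - \<rho>) * t (Suc k)"
      using \<open>t k \<le> t (Suc k)\<close> eta by (intro mult_left_mono) auto
    then have "(\<eta> - \<rho>) * t k \<le> (t k)\<^sup>2 + \<eta> * t (Suc k) - (t (Suc k))\<^sup>2"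
      using t_rate[OF assms] by (simp add: algebra_simps)
    then show ?thesis
      unfolding relaxation_weight_def by (simp add: divide_right_mono)
  qed
  finally show "(\<eta> - \<rho>) / real k \<le> relaxation_weight k" .
  have "\<eta> * t (Suc k) \<le> t (Suc k) * t (Suc k)"
    using \<open>0 < t k\<close> \<open>t k \<le> t (Suc k)\<close> t_ge_1[of "Suc k"] eta by (intro mult_right_mono) auto
  then show "relaxation_weight k \<le> 1"
    using \<open>0 < t k\<close> by (simp add: relaxation_weight_def power2_eq_square)
qed

definition "scaled_residual k = (t k)\<^sup>2 *\<^sub>R (A *v x k - b) - (\<eta> / \<delta>) *\<^sub>R (inertial_point t lam k - ls)"

lemma scaled_residual_step:
  assumes "1 \<le> k"
  shows "scaled_residual (Suc k) = (1 - relaxation_weight k) *\<^sub>R scaled_residual k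
    + relaxation_weight k *\<^sub>R ((\<eta> / \<delta>) *\<^sub>R (ls - inertial_point t lam k))"
proof -
  define e \<tau> where "e = A *v x k - b" and "\<tau> = t (Suc k)"
  have "(\<eta> / \<delta>) *\<^sub>R inertial_point t lam (Suc k)
      = (\<eta> / \<delta>) *\<^sub>R inertial_point t lam k + (\<eta> * \<tau>) *\<^sub>R e + \<tau>\<^sup>2 *\<^sub>R (A *v x (Suc k) - A *v x k)"
    using inertial_point_lam_step[OF assms] by (simp add: e_def \<tau>_def scaleR_diff_right diff_eq_eq algebra_simps)
  then have "scaled_residual (Suc k) = (\<tau>\<^sup>2 - \<eta> * \<tau>) *\<^sub>R e - (\<eta> / \<delta>) *\<^sub>R (inertial_point t lam k - ls)"
    by (simp add: scaled_residual_def e_def \<tau>_def algebra_simps)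
  also have "\<tau>\<^sup>2 - \<eta> * \<tau> = (1 - relaxation_weight k) * (t k)\<^sup>2"
    using t_pos[OF assms] by (simp add: relaxation_weight_def \<tau>_def field_simps)
  finally show ?thesis
    by (simp add: scaled_residual_def e_def algebra_simps)
qed

lemma scaled_residual_norm_step:
  assumes "1 \<le> k"
  shows "norm (scaled_residual (Suc k)) \<le> (1 - relaxation_weight k) * norm (scaled_residual k)
    + relaxation_weight k * (\<eta> / \<delta> * norm (ls - inertial_point t lam k))"
proof -
  have "0 \<le> (\<eta> - \<rho>) / real k"
    using eta by simp
  then have "0 \<le> relaxation_weight k" "relaxation_weight k \<le> 1"
    using relaxation_weight_bounds[OF assms] by linarith+
  have "norm (scaled_residual (Suc k)) \<le> norm ((1 - relaxation_weight k) *\<^sub>R scaled_residual k)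
      + norm (relaxation_weight k *\<^sub>R ((\<eta> / \<delta>) *\<^sub>R (ls - inertial_point t lam k)))"
    unfolding scaled_residual_step[OF assms] by (rule norm_triangle_ineq)
  also have "\<dots> = (1 - relaxation_weight k) * norm (scaled_residual k)
      + relaxation_weight k * (\<eta> / \<delta> * norm (ls - inertial_point t lam k))"
    using \<open>0 \<le> relaxation_weight k\<close> \<open>relaxation_weight k \<le> 1\<close> eta_pos delta by simp
  finally show ?thesis .
qed

lemma objective_gap_le:
  "\<bar>f (x k) - f xs\<bar> \<le> gap k + norm ls * norm (A *v x k - b) + \<beta> / 2 * (norm (A *v x k - b))\<^sup>2"
proof -
  have "\<bar>ls \<bullet> (A *v x k - b)\<bar> \<le> norm ls * norm (A *v x k - b)"
    by (rule Cauchy_Schwarz_ineq2)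
  moreover have "0 \<le> \<beta> / 2 * (norm (A *v x k - b))\<^sup>2"
    using beta by simp
  ultimately show ?thesis
    using gap_nonneg[of k] unfolding gap_eq by linarith
qed

end

locale accelerated_alm_convergent = accelerated_alm f gradf A b t \<rho> \<eta> \<gamma> \<delta> \<beta> x lam xs ls
  for f :: "real^'n \<Rightarrow> real" and gradf :: "real^'n \<Rightarrow> real^'n"
    and A :: "real^'n^'m" and b :: "real^'m"
    and t :: "nat \<Rightarrow> real" and \<rho> \<eta> \<gamma> \<delta> \<beta> :: real
    and x :: "nat \<Rightarrow> real^'n" and lam :: "nat \<Rightarrow> real^'m"
    and xs :: "real^'n" and ls :: "real^'m" +
  assumes conv: "(\<lambda>k. (x k, lam k)) \<longlonglongrightarrow> (xs, ls)"
begin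

lemma x_tendsto: "x \<longlonglongrightarrow> xs" and lam_tendsto: "lam \<longlonglongrightarrow> ls"
  using tendsto_fst[OF conv] tendsto_snd[OF conv] by simp_all

lemma distance_error_tendsto_zero: "distance_error \<longlonglongrightarrow> 0"
proof -
  have "distance_error \<longlonglongrightarrow> 5 * (0\<^sup>2 + 0\<^sup>2) / (2 * \<eta> * \<gamma>) + 5 * (0\<^sup>2 + 0\<^sup>2) / (2 * \<eta> * \<delta>)"
    unfolding distance_error_def[abs_def] using eta_pos gamma delta
    by (intro tendsto_intros tendsto_norm_zero LIM_zero LIMSEQ_shift_back x_tendsto lam_tendsto) auto
  then show ?thesis by simp
qed

lemma scaled_error_tendsto_zero: "scaled_error \<longlonglongrightarrow> 0"
proof (rule lyapunov_tendsto_zero)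
  show "\<forall>\<^sub>F k in sequentially. 0 \<le> energy_decrease k \<and> energy (Suc k) \<le> energy k - energy_decrease k"
    using eventually_ge_at_top[of 1] by eventually_elim (simp add: energy_decrease_nonneg energy_descent)
  show "\<forall>\<^sub>F k in sequentially. 0 \<le> scaled_error k
      \<and> scaled_error k \<le> (1 / (\<eta> - \<rho>) + 1 / (1 - \<eta>)) * real k * energy_decrease k"
    using eventually_ge_at_top[of 1]
  proof eventually_elim
    case (elim k)
    have "0 \<le> 1 / (\<eta> - \<rho>) + 1 / (1 - \<eta>)"
      using eta by simp
    then have "(1 / (\<eta> - \<rho>) + 1 / (1 - \<eta>)) * t k * energy_decrease k
        \<le> (1 / (\<eta> - \<rho>) + 1 / (1 - \<eta>)) * real k * energy_decrease k"
      using t_le_index[OF elim] energy_decrease_nonneg[OF elim] by (intro mult_right_mono mult_left_mono) auto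
    then show ?case
      using scaled_error_nonneg scaled_error_le_decrease[OF elim] by fastforce
  qed
  show "\<forall>\<^sub>F k in sequentially. 1 / 4 * scaled_error k - distance_error k \<le> energy k"
    using eventually_ge_at_top[of 1] by eventually_elim (use energy_bounds(1) in simp)
  show "\<forall>\<^sub>F k in sequentially. energy k \<le> 3 * scaled_error k + distance_error k"
    using eventually_ge_at_top[of 1] by eventually_elim (rule energy_bounds(2))
  show "0 \<le> 1 / (\<eta> - \<rho>) + 1 / (1 - \<eta>)"
    using eta by simp
qed (use distance_error_tendsto_zero in auto)

lemma scaled_error_terms_tendsto_zero:
  "(\<lambda>k. (t k)\<^sup>2 / \<eta> * gap k) \<longlonglongrightarrow> 0"
  "(\<lambda>k. ((t k - 1) * norm (x k - x (k - 1)))\<^sup>2 / (2 * \<eta> * \<gamma>)) \<longlonglongrightarrow> 0"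
  "(\<lambda>k. ((t k - 1) * norm (lam k - lam (k - 1)))\<^sup>2 / (2 * \<eta> * \<delta>)) \<longlonglongrightarrow> 0"
  using eta_pos gamma delta gap_nonneg
  by (intro tendsto_sandwich[OF _ _ tendsto_const scaled_error_tendsto_zero] always_eventually allI;
      simp add: scaled_error_def)+

lemma gap_rate: "(\<lambda>k. (t k)\<^sup>2 * gap k) \<longlonglongrightarrow> 0"
  using tendsto_mult_left_zero[OF scaled_error_terms_tendsto_zero(1), of \<eta>] eta_pos by simp

lemma scaled_steps_tendsto_zero:
  "(\<lambda>k. (t k - 1) * norm (x k - x (k - 1))) \<longlonglongrightarrow> 0"
  "(\<lambda>k. (t k - 1) * norm (lam k - lam (k - 1))) \<longlonglongrightarrow> 0"
  using tendsto_mult_left_zero[OF scaled_error_terms_tendsto_zero(2), of "2 * \<eta> * \<gamma>"]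
    tendsto_mult_left_zero[OF scaled_error_terms_tendsto_zero(3), of "2 * \<eta> * \<delta>"]
    eta_pos gamma delta by simp_all

lemma eventually_t_pos: "\<forall>\<^sub>F k in sequentially. 0 < t k"
  using eventually_ge_at_top[of 1] by eventually_elim (rule t_pos)

lemma residual_rate: "(\<lambda>k. (t k)\<^sup>2 * norm (A *v x k - b)) \<longlonglongrightarrow> 0"
proof -
  have "\<forall>\<^sub>F k in sequentially. 1 \<le> t k"
    using eventually_ge_at_top[of 1] by eventually_elim (rule t_ge_1)
  then have \<nu>: "inertial_point t lam \<longlonglongrightarrow> ls"
    by (rule inertial_point_tendsto[OF lam_tendsto scaled_steps_tendsto_zero(2)])
  then have "(\<lambda>k. ls - inertial_point t lam k) \<longlonglongrightarrow> 0"
    using tendsto_diff[OF tendsto_const[of ls] \<nu>] by simp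
  have "(\<lambda>k. norm (scaled_residual k)) \<longlonglongrightarrow> 0"
  proof (rule relaxation_tendsto_zero)
    show "\<forall>\<^sub>F k in sequentially. norm (scaled_residual (Suc k))
        \<le> (1 - relaxation_weight k) * norm (scaled_residual k)
          + relaxation_weight k * (\<eta> / \<delta> * norm (ls - inertial_point t lam k))"
      using eventually_ge_at_top[of 1] by eventually_elim (rule scaled_residual_norm_step)
    show "\<forall>\<^sub>F k in sequentially. (\<eta> - \<rho>) / real k \<le> relaxation_weight k \<and> relaxation_weight k \<le> 1"
      using eventually_ge_at_top[of 1] by eventually_elim (simp add: relaxation_weight_bounds)
    show "(\<lambda>k. \<eta> / \<delta> * norm (ls - inertial_point t lam k)) \<longlonglongrightarrow> 0"
      using \<open>(\<lambda>k. ls - inertial_point t lam k) \<longlonglongrightarrow> 0\<close> by (rule tendsto_mult_right_zero[OF tendsto_norm_zero])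
  qed (use eta in auto)
  then have "scaled_residual \<longlonglongrightarrow> 0"
    by (simp add: tendsto_norm_zero_iff)
  moreover have "(\<lambda>k. (\<eta> / \<delta>) *\<^sub>R (inertial_point t lam k - ls)) \<longlonglongrightarrow> 0"
    using tendsto_scaleR[OF tendsto_const LIM_zero[OF \<nu>]] by simp
  ultimately have "(\<lambda>k. scaled_residual k + (\<eta> / \<delta>) *\<^sub>R (inertial_point t lam k - ls)) \<longlonglongrightarrow> 0"
    by (rule tendsto_add_zero)
  then have "(\<lambda>k. norm ((t k)\<^sup>2 *\<^sub>R (A *v x k - b))) \<longlonglongrightarrow> 0"
    by (intro tendsto_norm_zero) (simp add: scaled_residual_def)
  then show ?thesis
    by simp
qed

lemma gap_smallo: "gap \<in> o(\<lambda>k. 1 / (t k)\<^sup>2)"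
  using gap_rate eventually_t_pos
  by (intro smallo_inverse_if_tendsto_zero) (auto simp: mult.commute elim: eventually_mono)

lemma step_smallo: "(\<lambda>k. norm ((x k, lam k) - (x (k - 1), lam (k - 1)))) \<in> o(\<lambda>k. 1 / t k)"
proof (rule smallo_inverse_if_tendsto_zero)
  show "(\<lambda>k. norm ((x k, lam k) - (x (k - 1), lam (k - 1))) * t k) \<longlonglongrightarrow> 0"
  proof (rule Lim_null_comparison)
    show "\<forall>\<^sub>F k in sequentially. norm (norm ((x k, lam k) - (x (k - 1), lam (k - 1))) * t k)
        \<le> t k * norm (x k - x (k - 1)) + t k * norm (lam k - lam (k - 1))"
      using eventually_t_pos
    proof eventually_elim
      case (elim k)
      then have "norm (norm ((x k, lam k) - (x (k - 1), lam (k - 1))) * t k)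
          = t k * norm (x k - x (k - 1), lam k - lam (k - 1))"
        by simp
      also have "\<dots> \<le> t k * (norm (x k - x (k - 1)) + norm (lam k - lam (k - 1)))"
        using elim by (intro mult_left_mono norm_Pair_le) auto
      finally show ?case by (simp add: distrib_left)
    qed
    show "(\<lambda>k. t k * norm (x k - x (k - 1)) + t k * norm (lam k - lam (k - 1))) \<longlonglongrightarrow> 0"
      using tendsto_add[OF inertial_step_tendsto_zero[OF x_tendsto scaled_steps_tendsto_zero(1)]
          inertial_step_tendsto_zero[OF lam_tendsto scaled_steps_tendsto_zero(2)]] by simp
  qed
  show "\<forall>\<^sub>F k in sequentially. t k \<noteq> 0"
    using eventually_t_pos by (auto elim: eventually_mono)
qed

lemma residual_smallo: "(\<lambda>k. norm (A *v x k - b)) \<in> o(\<lambda>k. 1 / (t k)\<^sup>2)"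
  using residual_rate eventually_t_pos
  by (intro smallo_inverse_if_tendsto_zero) (auto simp: mult.commute elim: eventually_mono)

lemma objective_gap_smallo: "(\<lambda>k. \<bar>f (x k) - f xs\<bar>) \<in> o(\<lambda>k. 1 / (t k)\<^sup>2)"
proof (rule smallo_inverse_if_tendsto_zero)
  define e where "e k = norm (A *v x k - b)" for k
  define r where "r k = (t k)\<^sup>2 * gap k + norm ls * ((t k)\<^sup>2 * e k) + \<beta> / 2 * ((t k)\<^sup>2 * e k) * e k" for k
  have "(\<lambda>k. A *v x k) \<longlonglongrightarrow> A *v xs"
    by (rule bounded_linear.tendsto[OF matrix_vector_mul_bounded_linear x_tendsto])
  from LIM_zero[OF this] have "e \<longlonglongrightarrow> 0"
    unfolding e_def[abs_def] A_xs by (rule tendsto_norm_zero)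
  moreover have te: "(\<lambda>k. (t k)\<^sup>2 * e k) \<longlonglongrightarrow> 0"
    using residual_rate by (simp add: e_def)
  ultimately have "(\<lambda>k. \<beta> / 2 * ((t k)\<^sup>2 * e k) * e k) \<longlonglongrightarrow> 0"
    by (intro tendsto_mult_zero[OF tendsto_mult_right_zero])
  then have "r \<longlonglongrightarrow> 0"
    unfolding r_def[abs_def] by (intro tendsto_add_zero gap_rate tendsto_mult_right_zero[OF te]) assumption
  moreover have "norm (\<bar>f (x k) - f xs\<bar> * (t k)\<^sup>2) \<le> r k" for k
    using mult_right_mono[OF objective_gap_le[of k] zero_le_power2[of "t k"]]
    by (simp add: r_def e_def abs_mult power2_eq_square algebra_simps)
  ultimately show "(\<lambda>k. \<bar>f (x k) - f xs\<bar> * (t k)\<^sup>2) \<longlonglongrightarrow> 0"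
    by (blast intro: Lim_null_comparison[OF always_eventually])
  show "\<forall>\<^sub>F k in sequentially. (t k)\<^sup>2 \<noteq> 0"
    using eventually_t_pos by eventually_elim simp
qed

end

theorem theorem4p3:
  fixes f :: "real^'n \<Rightarrow> real" and gradf :: "real^'n \<Rightarrow> real^'n"
    and A :: "real^'n^'m" and b :: "real^'m"
    and t :: "nat \<Rightarrow> real" and \<rho> \<eta> \<gamma> \<delta> \<beta> :: real
    and x :: "nat \<Rightarrow> real^'n" and lam :: "nat \<Rightarrow> real^'m"
    and xs :: "real^'n" and ls :: "real^'m"
  assumes f_convex: "convex_on UNIV f"
    and f_grad: "\<And>z. (f has_derivative (\<lambda>h. gradf z \<bullet> h)) (at z)"
    and f_C1: "continuous_on UNIV gradf"
    and Omega_ne: "kkt_set gradf A b \<noteq> {}"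
    and t_mono: "\<And>k. k \<ge> 1 \<Longrightarrow> t k \<le> t (k + 1)"
    and t1: "t 1 = 1"
    and t_gt1: "\<And>k. k > 2 \<Longrightarrow> t k > 1"
    and t_inf: "filterlim t at_top sequentially"
    and t_rate: "\<And>k. k \<ge> 1 \<Longrightarrow> (t (k + 1))\<^sup>2 - (t k)\<^sup>2 \<le> \<rho> * t (k + 1)"
    and rho: "0 < \<rho>" "\<rho> < 1"
    and eta: "\<rho> < \<eta>" "\<eta> < 1"
    and gamma: "\<gamma> > 0" and delta: "\<delta> > 0" and beta: "\<beta> \<ge> 0"
    and init: "x 0 = x 1" "lam 0 = lam 1"
    and x_update:
      "(\<forall>k\<ge>1. \<forall>y. subproblem_obj f A b \<beta> \<gamma> \<delta> \<eta> t x lam k (x (k + 1))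
                    \<le> subproblem_obj f A b \<beta> \<gamma> \<delta> \<eta> t x lam k y)
       \<or> (\<exists>L>0. (\<forall>u v. norm (gradf u - gradf v) \<le> L * norm (u - v)) \<and> \<gamma> \<le> 1 / L \<and>
           (\<forall>k\<ge>1. \<forall>y.
              subproblem_obj (\<lambda>z. gradf (extrap t x k) \<bullet> z) A b \<beta> \<gamma> \<delta> \<eta> t x lam k (x (k + 1))
              \<le> subproblem_obj (\<lambda>z. gradf (extrap t x k) \<bullet> z) A b \<beta> \<gamma> \<delta> \<eta> t x lam k y))"
    and lam_update: "\<And>k. k \<ge> 1 \<Longrightarrow>
       lam (k + 1) = extrap t lam k
         + \<delta> *\<^sub>R (c_k \<eta> t k *\<^sub>R (A *v x (k + 1)) - r_k \<eta> t A b x k)"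
    and limit_kkt: "(xs, ls) \<in> kkt_set gradf A b"
    and conv: "(\<lambda>k. (x k, lam k)) \<longlonglongrightarrow> (xs, ls)"
  shows "(\<lambda>k. aug_lag f A b \<beta> (x k) ls - aug_lag f A b \<beta> xs ls) \<in> o(\<lambda>k. 1 / (t k)\<^sup>2) \<and>
         (\<lambda>k. norm ((x k, lam k) - (x (k - 1), lam (k - 1)))) \<in> o(\<lambda>k. 1 / t k) \<and>
         (\<lambda>k. norm (A *v x k - b)) \<in> o(\<lambda>k. 1 / (t k)\<^sup>2) \<and>
         (\<lambda>k. \<bar>f (x k) - f xs\<bar>) \<in> o(\<lambda>k. 1 / (t k)\<^sup>2)"
proof -
  interpret accelerated_alm_convergent f gradf A b t \<rho> \<eta> \<gamma> \<delta> \<beta> x lam xs ls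
    by unfold_locales (fact assms)+
  show ?thesis
    using gap_smallo step_smallo residual_smallo objective_gap_smallo unfolding gap_def by blast
qed

end
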